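(* Let $\mathcal{L}:\mathbb{R}^m\to\mathbb{R}^m$ be a sufficiently smooth map, and consider the autonomous initial value problem $\frac{d\mathbf{u}}{dt}=\mathcal{L}(\mathbf{u})$, $\mathbf{u}(t_n)=\mathbf{u}^n$. Write $\mathcal{L}_{\mathbf{u}}=\frac{\partial \mathcal{L}}{\partial \mathbf{u}}$ for the Jacobian and $\frac{\partial}{\partial t}\mathcal{L}(\mathbf{u}):=\mathcal{L}_{\mathbf{u}}(\mathbf{u})\,\mathcal{L}(\mathbf{u})$ (the time derivative of $\mathcal{L}$ along solutions). For a step size $\Delta t>0$ and real parameters $A,B_0,B_1,C_0,C_1$, define the intermediate value $$\mathbf{u}^*=\mathbf{u}^n+A\Delta t\,\mathcal{L}(\mathbf{u}^n)+\tfrac12 A^2\Delta t^2\,\tfrac{\partial}{\partial t}\mathcal{L}(\mathbf{u}^n),$$ and the update $$\mathbf{u}^{n+1}=\mathbf{u}^n+\Delta t\big(B_0\mathcal{L}(\mathbf{u}^n)+B_1\mathcal{L}(\mathbf{u}^* )\big)+\tfrac12\Delta t^2\Big(C_0\tfrac{\partial}{\partial t}\mathcal{L}(\mathbf{u}^n)+C_1\tfrac{\partial}{\partial t}\mathcal{L}(\mathbf{u}^* )\Big).$$ If $A=\tfrac12$, $B_0=1$, $B_1=0$, $C_0=\tfrac13$, $C_1=\tfrac23$, then this two-stage iteration provides a fourth order accurate approximation to the exact solution $\mathbf{u}(t)$ at $t=t_n+\Delta t$, i.e. $\mathbf{u}^{n+1}-\mathbf{u}(t_n+\Delta t)=\mathcal{O}(\Delta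 t^5)$. Moreover, these values of $A,B_0,B_1,C_0,C_1$ are uniquely determined by this fourth order accuracy requirement (i.e., they are the only choice for which fourth order accuracy holds for all such $\mathcal{L}$).
   Context: Fourth order accuracy means the one-step (local) error $\mathbf{u}^{n+1}-\mathbf{u}(t_n+\Delta t)$ is $\mathcal{O}(\Delta t^5)$ as $\Delta t\to 0$, where $\mathbf{u}(t)$ is the exact solution of the initial value problem. *)

theory Defs
  imports "HOL-Analysis.Analysis" "HOL-Library.Landau_Symbols"
begin

definition partial_deriv :: "'m::finite \<Rightarrow> (real^'m \<Rightarrow> real^'m) \<Rightarrow> real^'m \<Rightarrow> real^'m" where
  "partial_deriv i g x = vector_derivative (\<lambda>t. g (x + t *\<^sub>R axis i 1)) (at 0)"

fun iter_partial :: "'m::finite list \<Rightarrow> (real^'m \<Rightarrow> real^'m) \<Rightarrow> real^'m \<Rightarrow> real^'m" where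
  "iter_partial [] g = g"
| "iter_partial (i # is) g = partial_deriv i (iter_partial is g)"

definition smooth_field :: "(real^'m::finite \<Rightarrow> real^'m) \<Rightarrow> bool" where
  "smooth_field L \<longleftrightarrow>
     (\<forall>is. continuous_on UNIV (iter_partial is L) \<and>
       (\<forall>i x. (\<lambda>t. iter_partial is L (x + t *\<^sub>R axis i 1)) differentiable (at 0)))"

definition dtL :: "(real^'m::finite \<Rightarrow> real^'m) \<Rightarrow> real^'m \<Rightarrow> real^'m" where
  "dtL L u = jacobian L (at u) *v L u"

definition two_stage_step ::
  "real \<Rightarrow> real \<Rightarrow> real \<Rightarrow> real \<Rightarrow> real \<Rightarrow> (real^'m::finite \<Rightarrow> real^'m) \<Rightarrow> real \<Rightarrow> real^'m \<Rightarrow> real^'m" where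
  "two_stage_step A B0 B1 C0 C1 L dt un =
     (let us = un + (A * dt) *\<^sub>R L un + (A\<^sup>2 * dt\<^sup>2 / 2) *\<^sub>R dtL L un
      in un + dt *\<^sub>R (B0 *\<^sub>R L un + B1 *\<^sub>R L us)
            + (dt\<^sup>2 / 2) *\<^sub>R (C0 *\<^sub>R dtL L un + C1 *\<^sub>R dtL L us))"

definition fourth_order_accurate ::
  "real \<Rightarrow> real \<Rightarrow> real \<Rightarrow> real \<Rightarrow> real \<Rightarrow> (real^'m::finite \<Rightarrow> real^'m) \<Rightarrow> bool" where
  "fourth_order_accurate A B0 B1 C0 C1 L \<longleftrightarrow>
     (\<forall>tn un (u :: real \<Rightarrow> real^'m) T. T > 0 \<and> u tn = un \<and>
        (\<forall>t\<in>{tn..tn+T}. (u has_vector_derivative L (u t)) (at t within {tn..tn+T})) \<longrightarrow>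
        (\<lambda>dt. norm (two_stage_step A B0 B1 C0 C1 L dt un - u (tn + dt)))
          \<in> O[at_right 0](\<lambda>dt. dt ^ 5))"

end

theory Submission
  imports Defs "HOL-Computational_Algebra.Polynomial" "HOL-Real_Asymp.Real_Asymp"
begin

text \<open>Along a solution of \<open>u' = L(u)\<close>, every smooth field \<open>g\<close> satisfies
  \<open>(g \<circ> u)' = (D\<^sub>L g) \<circ> u\<close> for the Lie derivative \<open>D\<^sub>L g = \<Sum>\<^sub>i L\<^sub>i \<partial>\<^sub>i g\<close>; in particular
  \<open>\<partial>\<^sub>t L = D\<^sub>L\<^sup>2 id\<close>.  Hence \<open>u(t\<^sub>n + h)\<close> and \<open>\<partial>\<^sub>t L(u(t\<^sub>n + h/2))\<close> have Taylor expansions with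
  coefficients \<open>D\<^sub>L\<^sup>k id (u\<^sup>n)\<close>.  With \<open>A = 1/2, B\<^sub>0 = 1, B\<^sub>1 = 0, C\<^sub>0 = 1/3, C\<^sub>1 = 2/3\<close> the scheme matches
  these expansions through \<open>h\<^sup>4\<close>; up to \<open>O(h\<^sup>5)\<close> remainders, the error is \<open>h\<^sup>2/3\<close> times the difference of
  \<open>\<partial>\<^sub>t L\<close> at the stage value \<open>u\<^sup>*\<close> and at \<open>u(t\<^sub>n + h/2)\<close>, which is \<open>O(h\<^sup>3)\<close> by a Lipschitz bound.

  Conversely, for the test equations \<open>u' = u\<close> and \<open>u' = u\<^sup>2\<close> (componentwise, \<open>u(0) = 1\<close>) the
  local error is a polynomial in \<open>h\<close> minus a remainder of order \<open>h\<^sup>5\<close>, so its coefficients of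
  \<open>h, \<dots>, h\<^sup>4\<close> vanish; these five order conditions determine the parameters.\<close>

section \<open>Partial derivatives and smooth fields\<close>

definition partially_differentiable :: "(real^'m::finite \<Rightarrow> real^'m) \<Rightarrow> bool" where
  "partially_differentiable g \<longleftrightarrow> (\<forall>i x. (\<lambda>t. g (x + t *\<^sub>R axis i 1)) differentiable (at 0))"

lemma iter_partial_append: "iter_partial (is @ js) g = iter_partial is (iter_partial js g)"
  by (induction "is") auto

lemma smooth_field_continuous: "smooth_field g \<Longrightarrow> continuous_on UNIV g"
  unfolding smooth_field_def by (metis iter_partial.simps(1))

lemma smooth_field_partially_differentiable: "smooth_field g \<Longrightarrow> partially_differentiable g"
  unfolding smooth_field_def partially_differentiable_def by (metis iter_partial.simps(1))

lemma smooth_field_partial_deriv: "smooth_field g \<Longrightarrow> smooth_field (partial_deriv i g)"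
  unfolding smooth_field_def by (metis iter_partial_append iter_partial.simps)

lemma smooth_fieldI_coinduct:
  assumes "g \<in> X"
    and "\<And>g. g \<in> X \<Longrightarrow> continuous_on UNIV g \<and> partially_differentiable g \<and> (\<forall>i. partial_deriv i g \<in> X)"
  shows "smooth_field g"
proof -
  have "iter_partial is g \<in> X" for "is"
    by (induction "is") (use assms in auto)
  then show ?thesis
    using assms(2) unfolding smooth_field_def partially_differentiable_def by blast
qed

lemma has_vector_derivative_partial_deriv:
  assumes "partially_differentiable g"
  shows "((\<lambda>t. g (x + t *\<^sub>R axis i 1)) has_vector_derivative partial_deriv i g (x + s *\<^sub>R axis i 1)) (at s)"
proof -
  let ?y = "x + s *\<^sub>R axis i 1"
  have "((\<lambda>t. g (?y + t *\<^sub>R axis i 1)) has_vector_derivative partial_deriv i g ?y) (at ((\<lambda>t. t - s) s))"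
    using assms unfolding partially_differentiable_def partial_deriv_def
    by (simp add: vector_derivative_works)
  moreover have "((\<lambda>t. t - s) has_vector_derivative 1) (at s)"
    by (auto intro!: derivative_eq_intros)
  moreover have "(\<lambda>t. g (?y + t *\<^sub>R axis i 1)) \<circ> (\<lambda>t. t - s) = (\<lambda>t. g (x + t *\<^sub>R axis i 1))"
    by (auto simp: o_def algebra_simps)
  ultimately show ?thesis
    using vector_diff_chain_at by fastforce
qed

lemma partial_deriv_eqI:
  "((\<lambda>t. g (x + t *\<^sub>R axis i 1)) has_vector_derivative g') (at 0) \<Longrightarrow> partial_deriv i g x = g'"
  unfolding partial_deriv_def by (rule vector_derivative_at)

lemma onorm_scaleR_left_le: "onorm (\<lambda>t::real. t *\<^sub>R v) \<le> norm v"
  by (rule onorm_le) (simp add: mult.commute)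

lemma coordinate_increment_bound:
  assumes g: "partially_differentiable g"
    and close: "\<And>t. t \<in> closed_segment 0 c \<Longrightarrow> norm (partial_deriv j g (y + t *\<^sub>R axis j 1) - D) \<le> e"
  shows "norm (g (y + c *\<^sub>R axis j 1) - g y - c *\<^sub>R D) \<le> e * \<bar>c\<bar>"
proof -
  define \<psi> where "\<psi> t = g (y + t *\<^sub>R axis j 1) - t *\<^sub>R D" for t
  have "norm (\<psi> c - \<psi> 0) \<le> e * norm (c - 0)"
  proof (rule differentiable_bound[of "closed_segment 0 c" \<psi> "\<lambda>t \<tau>. \<tau> *\<^sub>R (partial_deriv j g (y + t *\<^sub>R axis j 1) - D)"])
    fix t assume t: "t \<in> closed_segment 0 c"
    have "(\<psi> has_vector_derivative partial_deriv j g (y + t *\<^sub>R axis j 1) - D) (at t)"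
      unfolding \<psi>_def
      by (auto intro!: derivative_eq_intros has_vector_derivative_partial_deriv[OF g])
    then show "(\<psi> has_derivative (\<lambda>\<tau>. \<tau> *\<^sub>R (partial_deriv j g (y + t *\<^sub>R axis j 1) - D))) (at t within closed_segment 0 c)"
      unfolding has_vector_derivative_def by (rule has_derivative_at_withinI)
    show "onorm (\<lambda>\<tau>. \<tau> *\<^sub>R (partial_deriv j g (y + t *\<^sub>R axis j 1) - D)) \<le> e"
      using onorm_scaleR_left_le close[OF t] order_trans by blast
  qed auto
  then show ?thesis by (simp add: \<psi>_def algebra_simps)
qed

lemma norm_partial_coordinates_le:
  fixes h :: "real^'m::finite"
  assumes "finite S" "j \<notin> S" "\<bar>t\<bar> \<le> \<bar>h$j\<bar>"
  shows "norm ((\<Sum>k\<in>S. h$k *\<^sub>R axis k (1::real)) + t *\<^sub>R axis j 1) \<le> norm h"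
proof (rule norm_le_componentwise_cart)
  fix k
  show "norm (((\<Sum>k\<in>S. h$k *\<^sub>R axis k (1::real)) + t *\<^sub>R axis j 1) $ k) \<le> norm (h $ k)"
    using assms by (cases "k = j") (simp_all add: axis_def if_distrib sum.delta cong: if_cong)
qed

lemma partial_coordinates_increment:
  fixes g :: "real^'m::finite \<Rightarrow> real^'m"
  assumes g: "partially_differentiable g" and cont: "\<And>i. continuous_on UNIV (partial_deriv i g)"
    and "finite S" and "e > 0"
  shows "\<exists>d>0. \<forall>h. norm h < d \<longrightarrow>
    norm (g (x + (\<Sum>k\<in>S. h$k *\<^sub>R axis k 1)) - g x - (\<Sum>k\<in>S. h$k *\<^sub>R partial_deriv k g x)) \<le> e * norm h"
  using \<open>finite S\<close> \<open>e > 0\<close>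
proof (induction S arbitrary: e rule: finite_induct)
  case empty
  then show ?case by (auto intro!: exI[of _ 1])
next
  case (insert j S)
  obtain d1 where "d1 > 0" and d1: "\<And>h. norm h < d1 \<Longrightarrow>
      norm (g (x + (\<Sum>k\<in>S. h$k *\<^sub>R axis k 1)) - g x - (\<Sum>k\<in>S. h$k *\<^sub>R partial_deriv k g x)) \<le> e/2 * norm h"
    using insert.IH[of "e/2"] insert.prems by auto
  obtain d2 where "d2 > 0" and d2: "\<And>y. dist y x < d2 \<Longrightarrow> dist (partial_deriv j g y) (partial_deriv j g x) < e/2"
    using cont[of j] insert.prems unfolding continuous_on_eq_continuous_at[OF open_UNIV] continuous_at_eps_delta
    by (meson UNIV_I half_gt_zero)
  have "norm (g (x + (\<Sum>k\<in>insert j S. h$k *\<^sub>R axis k 1)) - g x - (\<Sum>k\<in>insert j S. h$k *\<^sub>R partial_deriv k g x))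
      \<le> e * norm h" if h: "norm h < min d1 d2" for h
  proof -
    define y where "y = x + (\<Sum>k\<in>S. h$k *\<^sub>R axis k 1)"
    have "norm (g (y + h$j *\<^sub>R axis j 1) - g y - h$j *\<^sub>R partial_deriv j g x) \<le> e/2 * \<bar>h$j\<bar>"
    proof (rule coordinate_increment_bound[OF g])
      fix t assume "t \<in> closed_segment 0 (h$j)"
      then have "\<bar>t\<bar> \<le> \<bar>h$j\<bar>" by (auto simp: closed_segment_eq_real_ivl split: if_splits)
      then have "dist (y + t *\<^sub>R axis j 1) x < d2"
        using norm_partial_coordinates_le[OF insert.hyps, of t h] h by (auto simp: y_def dist_norm add.assoc)
      then show "norm (partial_deriv j g (y + t *\<^sub>R axis j 1) - partial_deriv j g x) \<le> e/2"
        using d2 by (simp add: dist_norm less_imp_le)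
    qed
    also have "\<dots> \<le> e/2 * norm h"
      using insert.prems by (intro mult_left_mono component_le_norm_cart) auto
    finally have step: "norm (g (y + h$j *\<^sub>R axis j 1) - g y - h$j *\<^sub>R partial_deriv j g x) \<le> e/2 * norm h" .
    have rest: "norm (g y - g x - (\<Sum>k\<in>S. h$k *\<^sub>R partial_deriv k g x)) \<le> e/2 * norm h"
      using d1 h by (simp add: y_def)
    have split: "g (x + (\<Sum>k\<in>insert j S. h$k *\<^sub>R axis k 1)) - g x - (\<Sum>k\<in>insert j S. h$k *\<^sub>R partial_deriv k g x)
        = (g (y + h$j *\<^sub>R axis j 1) - g y - h$j *\<^sub>R partial_deriv j g x)
          + (g y - g x - (\<Sum>k\<in>S. h$k *\<^sub>R partial_deriv k g x))"
      using insert.hyps by (simp add: y_def algebra_simps)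
    show ?thesis
      unfolding split using norm_triangle_ineq[of "g (y + h$j *\<^sub>R axis j 1) - g y - h$j *\<^sub>R partial_deriv j g x"
          "g y - g x - (\<Sum>k\<in>S. h$k *\<^sub>R partial_deriv k g x)"] step rest by linarith
  qed
  then show ?case
    using \<open>d1 > 0\<close> \<open>d2 > 0\<close> by (intro exI[of _ "min d1 d2"]) auto
qed

lemma sum_scaleR_axis: "(\<Sum>k\<in>UNIV. f k *\<^sub>R axis k (1::real)) = (\<chi> k. f k)"
  by (simp add: vec_eq_iff axis_def if_distrib sum.delta cong: if_cong)

lemma has_derivative_partial_derivs:
  fixes g :: "real^'m::finite \<Rightarrow> real^'m"
  assumes g: "partially_differentiable g" and cont: "\<And>i. continuous_on UNIV (partial_deriv i g)"
  shows "(g has_derivative (\<lambda>v. \<Sum>i\<in>UNIV. v$i *\<^sub>R partial_deriv i g x)) (at x)"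
  unfolding has_derivative_at_alt
proof (intro conjI allI impI)
  show "bounded_linear (\<lambda>v::real^'m. \<Sum>i\<in>UNIV. v$i *\<^sub>R partial_deriv i g x)"
    by (intro bounded_linear_sum bounded_linear_compose[OF bounded_linear_scaleR_left bounded_linear_vec_nth])
  fix e :: real assume "e > 0"
  then obtain d where "d > 0" and d: "\<And>h. norm h < d \<Longrightarrow>
      norm (g (x + h) - g x - (\<Sum>k\<in>UNIV. h$k *\<^sub>R partial_deriv k g x)) \<le> e * norm h"
    using partial_coordinates_increment[OF g cont finite_class.finite_UNIV, of e x] unfolding sum_scaleR_axis vec_lambda_eta by blast
  show "\<exists>d>0. \<forall>y. norm (y - x) < d \<longrightarrow>
      norm (g y - g x - (\<Sum>i\<in>UNIV. (y - x) $ i *\<^sub>R partial_deriv i g x)) \<le> e * norm (y - x)"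
    using \<open>d > 0\<close> d[of "_ - x"] by auto
qed

section \<open>Lie derivatives\<close>

text \<open>Finite sums of products \<open>f(x)\<^sub>j \<cdot> h(x)\<close> are closed under partial derivatives by the
  product rule; this makes their smoothness, and hence that of Lie derivatives, provable by
  coinduction.\<close>
definition product_sum ::
  "('m::finite \<times> (real^'m \<Rightarrow> real^'m) \<times> (real^'m \<Rightarrow> real^'m)) list \<Rightarrow> real^'m \<Rightarrow> real^'m" where
  "product_sum ts x = sum_list (map (\<lambda>(j, f, h). f x $ j *\<^sub>R h x) ts)"

fun product_rule_terms ::
  "'m::finite \<Rightarrow> ('m \<times> (real^'m \<Rightarrow> real^'m) \<times> (real^'m \<Rightarrow> real^'m)) list
     \<Rightarrow> ('m \<times> (real^'m \<Rightarrow> real^'m) \<times> (real^'m \<Rightarrow> real^'m)) list" where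
  "product_rule_terms i [] = []"
| "product_rule_terms i ((j, f, h) # ts) =
     (j, partial_deriv i f, h) # (j, f, partial_deriv i h) # product_rule_terms i ts"

lemma product_sum_simps [simp]:
  "product_sum [] x = 0"
  "product_sum ((j, f, h) # ts) x = f x $ j *\<^sub>R h x + product_sum ts x"
  by (simp_all add: product_sum_def)

lemma has_vector_derivative_vec_nth:
  "(F has_vector_derivative F') (at t within S) \<Longrightarrow>
    ((\<lambda>t. F t $ j) has_field_derivative F' $ j) (at t within S)"
proof -
  assume "(F has_vector_derivative F') (at t within S)"
  from bounded_linear.has_derivative[OF bounded_linear_vec_nth this[unfolded has_vector_derivative_def]]
  have "((\<lambda>t. F t $ j) has_derivative (\<lambda>r. (r *\<^sub>R F') $ j)) (at t within S)" .
  moreover have "(\<lambda>r. (r *\<^sub>R F') $ j) = (*) (F' $ j)" by (auto simp: fun_eq_iff)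
  ultimately show ?thesis by (simp add: has_field_derivative_def)
qed

lemma has_vector_derivative_product_sum:
  assumes "\<forall>(j, f, h)\<in>set ts. partially_differentiable f \<and> partially_differentiable h"
  shows "((\<lambda>t. product_sum ts (x + t *\<^sub>R axis i 1)) has_vector_derivative
           product_sum (product_rule_terms i ts) x) (at 0)"
  using assms
proof (induction ts)
  case (Cons a ts)
  obtain j f h where a: "a = (j, f, h)" by (cases a)
  have "((\<lambda>t. f (x + t *\<^sub>R axis i 1) $ j) has_field_derivative partial_deriv i f x $ j) (at 0)"
    using has_vector_derivative_partial_deriv[of f x i 0] Cons.prems a
    by (auto intro: has_vector_derivative_vec_nth)
  moreover have "((\<lambda>t. h (x + t *\<^sub>R axis i 1)) has_vector_derivative partial_deriv i h x) (at 0)"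
    using has_vector_derivative_partial_deriv[of h x i 0] Cons.prems a by auto
  moreover have "((\<lambda>t. product_sum ts (x + t *\<^sub>R axis i 1)) has_vector_derivative
      product_sum (product_rule_terms i ts) x) (at 0)"
    using Cons by simp
  ultimately have "((\<lambda>t. f (x + t *\<^sub>R axis i 1) $ j *\<^sub>R h (x + t *\<^sub>R axis i 1) + product_sum ts (x + t *\<^sub>R axis i 1))
      has_vector_derivative (f x $ j *\<^sub>R partial_deriv i h x + partial_deriv i f x $ j *\<^sub>R h x)
        + product_sum (product_rule_terms i ts) x) (at 0)"
    by (intro has_vector_derivative_add has_vector_derivative_eq_rhs[OF has_vector_derivative_scaleR]) auto
  then show ?case
    unfolding a by (simp add: algebra_simps)
qed simp

lemma partially_differentiable_product_sum:
  "\<forall>(j, f, h)\<in>set ts. partially_differentiable f \<and> partially_differentiable h \<Longrightarrow>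
    partially_differentiable (product_sum ts)"
  using has_vector_derivative_product_sum differentiableI_vector
  unfolding partially_differentiable_def[of "product_sum ts"] by blast

lemma partial_deriv_product_sum:
  "\<forall>(j, f, h)\<in>set ts. partially_differentiable f \<and> partially_differentiable h \<Longrightarrow>
    partial_deriv i (product_sum ts) = product_sum (product_rule_terms i ts)"
  by (auto intro!: ext partial_deriv_eqI has_vector_derivative_product_sum)

lemma continuous_on_product_sum:
  "\<forall>(j, f, h)\<in>set ts. continuous_on UNIV f \<and> continuous_on UNIV h \<Longrightarrow>
    continuous_on UNIV (product_sum ts)"
  by (induction ts) (auto intro!: continuous_intros)

lemma smooth_field_product_sum:
  assumes "\<forall>(j, f, h)\<in>set ts. smooth_field f \<and> smooth_field h"
  shows "smooth_field (product_sum ts)"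
proof (rule smooth_fieldI_coinduct)
  let ?X = "{product_sum ts | ts. \<forall>(j, f, h)\<in>set ts. smooth_field f \<and> smooth_field h}"
  show "product_sum ts \<in> ?X" using assms by blast
  fix g assume "g \<in> ?X"
  then obtain ts where g: "g = product_sum ts" and ts: "\<forall>(j, f, h)\<in>set ts. smooth_field f \<and> smooth_field h"
    by blast
  have terms: "\<forall>(j, f, h)\<in>set (product_rule_terms i ts). smooth_field f \<and> smooth_field h" for i
    using ts by (induction ts rule: product_rule_terms.induct) (auto simp: smooth_field_partial_deriv)
  have cont: "\<forall>(j, f, h)\<in>set ts. continuous_on UNIV f \<and> continuous_on UNIV h"
    using ts smooth_field_continuous by fast
  have diff: "\<forall>(j, f, h)\<in>set ts. partially_differentiable f \<and> partially_differentiable h"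
    using ts smooth_field_partially_differentiable by fast
  show "continuous_on UNIV g \<and> partially_differentiable g \<and> (\<forall>i. partial_deriv i g \<in> ?X)"
    unfolding g partial_deriv_product_sum[OF diff]
    using continuous_on_product_sum[OF cont] partially_differentiable_product_sum[OF diff] terms by blast
qed

lemma sum_UNIV_eq_product_sum:
  fixes f :: "real^'m::finite \<Rightarrow> real^'m"
  obtains ts where "\<And>x. (\<Sum>j\<in>UNIV. f x $ j *\<^sub>R h j x) = product_sum ts x"
    and "set ts = (\<lambda>j. (j, f, h j)) ` UNIV"
proof -
  obtain js :: "'m::finite list" where js: "set js = UNIV" "distinct js"
    using finite_distinct_list[of "UNIV :: 'm set"] by auto
  show thesis
    by (rule that[of "map (\<lambda>j. (j, f, h j)) js"])
      (use js in \<open>simp_all add: product_sum_def o_def sum_list_distinct_conv_sum_set\<close>)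
qed

definition lie_deriv :: "(real^'m::finite \<Rightarrow> real^'m) \<Rightarrow> (real^'m \<Rightarrow> real^'m) \<Rightarrow> real^'m \<Rightarrow> real^'m" where
  "lie_deriv L g x = (\<Sum>i\<in>UNIV. L x $ i *\<^sub>R partial_deriv i g x)"

lemma smooth_field_lie_deriv:
  assumes "smooth_field L" "smooth_field g"
  shows "smooth_field (lie_deriv L g)"
proof -
  obtain ts where eq: "\<And>x. lie_deriv L g x = product_sum ts x"
    and ts: "set ts = (\<lambda>i. (i, L, partial_deriv i g)) ` UNIV"
    using sum_UNIV_eq_product_sum[of L "\<lambda>i. partial_deriv i g"] unfolding lie_deriv_def by blast
  have "smooth_field (product_sum ts)"
    using assms by (auto simp: ts intro!: smooth_field_product_sum smooth_field_partial_deriv)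
  moreover have "lie_deriv L g = product_sum ts"
    using eq by blast
  ultimately show ?thesis by simp
qed

lemma smooth_field_has_derivative_lie_deriv:
  "smooth_field g \<Longrightarrow> (g has_derivative (\<lambda>v. lie_deriv (\<lambda>_. v) g x)) (at x)"
  unfolding lie_deriv_def
  by (intro has_derivative_partial_derivs smooth_field_partially_differentiable
      smooth_field_continuous smooth_field_partial_deriv)

lemma dtL_eq_lie_deriv:
  assumes "smooth_field L"
  shows "dtL L = lie_deriv L L"
proof
  fix x
  have "(L has_derivative (\<lambda>v. lie_deriv (\<lambda>_. v) L x)) (at x)"
    using assms by (rule smooth_field_has_derivative_lie_deriv)
  moreover from this have "(L has_derivative (\<lambda>v. jacobian L (at x) *v v)) (at x)"
    by (metis differentiableI jacobian_works)
  ultimately have "(\<lambda>v. lie_deriv (\<lambda>_. v) L x) = (\<lambda>v. jacobian L (at x) *v v)"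
    by (rule has_derivative_unique)
  then show "dtL L x = lie_deriv L L x"
    unfolding dtL_def lie_deriv_def by metis
qed

lemma partial_deriv_const: "partial_deriv i (\<lambda>_. c) = (\<lambda>_. 0)"
  by (auto intro!: ext partial_deriv_eqI)

lemma partial_deriv_id: "partial_deriv i (\<lambda>x. x) = (\<lambda>_. axis i 1)"
  by (auto intro!: ext partial_deriv_eqI derivative_eq_intros)

lemma smooth_field_const: "smooth_field (\<lambda>_. c)"
  by (rule smooth_fieldI_coinduct[where X = "range (\<lambda>c _. c)"])
    (auto simp: partially_differentiable_def partial_deriv_const)

lemma smooth_field_id: "smooth_field (\<lambda>x. x)"
  by (rule smooth_fieldI_coinduct[where X = "insert (\<lambda>x. x) (range (\<lambda>c _. c))"])
    (auto simp: partially_differentiable_def partial_deriv_const partial_deriv_id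
      intro!: derivative_intros)

lemma lie_deriv_id: "lie_deriv L (\<lambda>x. x) = L"
  by (simp add: lie_deriv_def partial_deriv_id sum_scaleR_axis fun_eq_iff)

section \<open>Taylor expansion along solutions\<close>

lemma taylor_remainder_bound:
  fixes Df :: "nat \<Rightarrow> real \<Rightarrow> 'a::banach"
  assumes "0 < p" "a \<le> b"
    and Df: "\<And>m t. m < p \<Longrightarrow> t \<in> {a..b} \<Longrightarrow> (Df m has_vector_derivative Df (Suc m) t) (at t within {a..b})"
    and bound: "\<And>t. t \<in> {a..b} \<Longrightarrow> norm (Df p t) \<le> M"
  shows "norm (Df 0 b - (\<Sum>i<p. ((b - a)^i / fact i) *\<^sub>R Df i a)) \<le> M * (b - a)^p / fact p"
proof -
  define r where "r x = ((b - x)^(p - 1) / fact (p - 1)) *\<^sub>R Df p x" for x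
  define w where "w x = M * (b - x)^(p - 1) / fact (p - 1)" for x
  have r: "(r has_integral Df 0 b - (\<Sum>i<p. ((b - a)^i / fact i) *\<^sub>R Df i a)) {a..b}"
    unfolding r_def using Taylor_has_integral[of p Df "Df 0" a b] assms by auto
  have "((\<lambda>x. - (M * (b - x)^p / fact p)) has_vector_derivative w x) (at x within {a..b})" for x
  proof -
    have "fact p = real p * fact (p - 1)"
      using \<open>0 < p\<close> fact_reduce by auto
    then show ?thesis
      unfolding has_real_derivative_iff_has_vector_derivative[symmetric] w_def
      by (auto intro!: derivative_eq_intros simp: field_simps)
  qed
  from fundamental_theorem_of_calculus[OF \<open>a \<le> b\<close> this]
  have w: "(w has_integral M * (b - a)^p / fact p) {a..b}"
    using \<open>0 < p\<close> by (simp add: power_0_left)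
  have "norm (integral {a..b} r) \<le> integral {a..b} w"
  proof (rule integral_norm_bound_integral)
    fix x assume "x \<in> {a..b}"
    then have "(b - x)^(p - 1) / fact (p - 1) * norm (Df p x) \<le> (b - x)^(p - 1) / fact (p - 1) * M"
      using bound[of x] by (intro mult_left_mono) auto
    then show "norm (r x) \<le> w x"
      using \<open>x \<in> {a..b}\<close> by (simp add: r_def w_def mult.commute)
  qed (use r w in blast)+
  then show ?thesis
    using integral_unique[OF r] integral_unique[OF w] by simp
qed

lemma has_vector_derivative_smooth_field_comp:
  assumes "smooth_field g" and u: "(u has_vector_derivative L (u t)) (at t within S)"
  shows "((\<lambda>t. g (u t)) has_vector_derivative lie_deriv L g (u t)) (at t within S)"
proof -
  have "(g has_derivative (\<lambda>v. lie_deriv (\<lambda>_. v) g (u t))) (at (u t) within u ` S)"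
    using smooth_field_has_derivative_lie_deriv[OF assms(1)] by (rule has_derivative_at_withinI)
  from vector_derivative_diff_chain_within[OF u this] show ?thesis
    by (simp add: o_def lie_deriv_def)
qed

lemma smooth_field_lie_deriv_funpow:
  "smooth_field L \<Longrightarrow> smooth_field g \<Longrightarrow> smooth_field ((lie_deriv L ^^ k) g)"
  by (induction k) (simp_all add: smooth_field_lie_deriv)

lemma taylor_along_solution:
  fixes L g :: "real^'m::finite \<Rightarrow> real^'m"
  assumes L: "smooth_field L" and g: "smooth_field g" and "0 < p"
    and sol: "\<forall>t\<in>{tn..tn+T}. (u has_vector_derivative L (u t)) (at t within {tn..tn+T})"
  obtains M where "\<And>s. s \<in> {0..T} \<Longrightarrow>
    norm (g (u (tn + s)) - (\<Sum>k<p. (s^k / fact k) *\<^sub>R (lie_deriv L ^^ k) g (u tn))) \<le> M * s^p"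
proof -
  define I where "I = {tn..tn+T}"
  define Df where "Df k t = (lie_deriv L ^^ k) g (u t)" for k t
  have Df: "(Df k has_vector_derivative Df (Suc k) t) (at t within J)" if "t \<in> J" "J \<subseteq> I" for k t J
  proof -
    have "(u has_vector_derivative L (u t)) (at t within J)"
      using sol that by (auto simp: I_def intro: has_vector_derivative_within_subset)
    from has_vector_derivative_smooth_field_comp[of "(lie_deriv L ^^ k) g" u L t J,
        OF smooth_field_lie_deriv_funpow[OF L g] this]
    show ?thesis by (simp add: Df_def[abs_def])
  qed
  have "continuous_on I u"
    using sol has_vector_derivative_continuous continuous_on_eq_continuous_within I_def by blast
  then have "compact (Df p ` I)"
    unfolding Df_def I_def
    by (intro compact_continuous_image continuous_on_compose2[OF
          smooth_field_continuous[OF smooth_field_lie_deriv_funpow[OF L g]]]) auto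
  then obtain B where B: "\<And>t. t \<in> I \<Longrightarrow> norm (Df p t) \<le> B"
    by (meson compact_imp_bounded bounded_iff imageI)
  show thesis
  proof (rule that[of "B / fact p"])
    fix s assume s: "s \<in> {0..T}"
    have "norm (Df 0 (tn + s) - (\<Sum>k<p. ((tn + s - tn)^k / fact k) *\<^sub>R Df k tn)) \<le> B * (tn + s - tn)^p / fact p"
      using s by (intro taylor_remainder_bound[OF \<open>0 < p\<close>] Df B) (auto simp: I_def)
    then show "norm (g (u (tn + s)) - (\<Sum>k<p. (s^k / fact k) *\<^sub>R (lie_deriv L ^^ k) g (u tn))) \<le> B / fact p * s^p"
      by (simp add: Df_def)
  qed
qed

text \<open>The \<open>k\<close>-th time derivative of every solution of \<open>u' = L(u)\<close> is \<open>solution_deriv L k \<circ> u\<close>.\<close>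
definition solution_deriv :: "(real^'m::finite \<Rightarrow> real^'m) \<Rightarrow> nat \<Rightarrow> real^'m \<Rightarrow> real^'m" where
  "solution_deriv L k = (lie_deriv L ^^ k) (\<lambda>x. x)"

lemma smooth_field_solution_deriv: "smooth_field L \<Longrightarrow> smooth_field (solution_deriv L k)"
  unfolding solution_deriv_def by (rule smooth_field_lie_deriv_funpow[OF _ smooth_field_id])

lemma solution_deriv_1: "solution_deriv L 1 = L"
  and solution_deriv_2: "smooth_field L \<Longrightarrow> solution_deriv L 2 = dtL L"
  by (simp_all add: solution_deriv_def numeral_2_eq_2 lie_deriv_id dtL_eq_lie_deriv)

lemma solution_taylor_bounds:
  fixes L :: "real^'m::finite \<Rightarrow> real^'m"
  assumes L: "smooth_field L"
    and sol: "\<forall>t\<in>{tn..tn+T}. (u has_vector_derivative L (u t)) (at t within {tn..tn+T})"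
  defines "D k \<equiv> solution_deriv L k (u tn)"
  obtains M where "0 \<le> M"
    and "\<And>s. s \<in> {0..T} \<Longrightarrow>
      norm (u (tn + s) - (u tn + s *\<^sub>R D 1 + (s^2/2) *\<^sub>R D 2 + (s^3/6) *\<^sub>R D 3 + (s^4/24) *\<^sub>R D 4)) \<le> M * s^5"
    and "\<And>s. s \<in> {0..T} \<Longrightarrow>
      norm (solution_deriv L 2 (u (tn + s)) - (D 2 + s *\<^sub>R D 3 + (s^2/2) *\<^sub>R D 4)) \<le> M * s^3"
proof -
  obtain M5 where M5: "\<And>s. s \<in> {0..T} \<Longrightarrow>
      norm (u (tn + s) - (\<Sum>k<5. (s^k / fact k) *\<^sub>R (lie_deriv L ^^ k) (\<lambda>x. x) (u tn))) \<le> M5 * s^5"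
    by (rule taylor_along_solution[OF L smooth_field_id _ sol, of 5]) (simp, blast)
  obtain M3 where M3: "\<And>s. s \<in> {0..T} \<Longrightarrow> norm (solution_deriv L 2 (u (tn + s))
      - (\<Sum>k<3. (s^k / fact k) *\<^sub>R (lie_deriv L ^^ k) (solution_deriv L 2) (u tn))) \<le> M3 * s^3"
    by (rule taylor_along_solution[OF L smooth_field_solution_deriv[OF L] _ sol, of 3]) (simp, blast)
  have "(lie_deriv L ^^ k) (solution_deriv L 2) = solution_deriv L (k + 2)" for k
    by (simp only: solution_deriv_def funpow_add o_apply)
  then have sum3: "(\<Sum>k<3. (s^k / fact k) *\<^sub>R (lie_deriv L ^^ k) (solution_deriv L 2) (u tn))
      = D 2 + s *\<^sub>R D 3 + (s^2/2) *\<^sub>R D 4" for s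
    by (simp add: D_def eval_nat_numeral)
  have sum5: "(\<Sum>k<5. (s^k / fact k) *\<^sub>R (lie_deriv L ^^ k) (\<lambda>x. x) (u tn))
      = u tn + s *\<^sub>R D 1 + (s^2/2) *\<^sub>R D 2 + (s^3/6) *\<^sub>R D 3 + (s^4/24) *\<^sub>R D 4" for s
    by (simp add: D_def solution_deriv_def eval_nat_numeral)
  show thesis
  proof (rule that[of "max (max M5 M3) 0"])
    fix s assume s: "s \<in> {0..T}"
    then have "M5 * s^5 \<le> max (max M5 M3) 0 * s^5" "M3 * s^3 \<le> max (max M5 M3) 0 * s^3"
      by (simp_all add: mult_right_mono)
    then show "norm (u (tn + s) - (u tn + s *\<^sub>R D 1 + (s^2/2) *\<^sub>R D 2 + (s^3/6) *\<^sub>R D 3 + (s^4/24) *\<^sub>R D 4))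
        \<le> max (max M5 M3) 0 * s^5"
      and "norm (solution_deriv L 2 (u (tn + s)) - (D 2 + s *\<^sub>R D 3 + (s^2/2) *\<^sub>R D 4)) \<le> max (max M5 M3) 0 * s^3"
      using M5[OF s] M3[OF s] unfolding sum5 sum3 by linarith+
  qed simp
qed

section \<open>Consistency of the scheme\<close>

lemma onorm_lie_deriv_le:
  fixes g :: "real^'m::finite \<Rightarrow> real^'m"
  shows "onorm (\<lambda>v. lie_deriv (\<lambda>_. v) g x) \<le> (\<Sum>i\<in>UNIV. norm (partial_deriv i g x))"
proof (rule onorm_le)
  fix v :: "real^'m"
  have "norm (lie_deriv (\<lambda>_. v) g x) \<le> (\<Sum>i\<in>UNIV. norm (v$i *\<^sub>R partial_deriv i g x))"
    unfolding lie_deriv_def by (rule norm_sum)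
  also have "\<dots> \<le> (\<Sum>i\<in>UNIV. norm v * norm (partial_deriv i g x))"
    by (intro sum_mono) (simp add: component_le_norm_cart mult_right_mono)
  finally show "norm (lie_deriv (\<lambda>_. v) g x) \<le> (\<Sum>i\<in>UNIV. norm (partial_deriv i g x)) * norm v"
    by (simp add: sum_distrib_left mult.commute)
qed

lemma smooth_field_lipschitz_on:
  assumes g: "smooth_field g" and "compact S" "convex S"
  obtains K where "K-lipschitz_on S g"
proof -
  have "continuous_on S (\<lambda>x. \<Sum>i\<in>UNIV. norm (partial_deriv i g x))"
    using smooth_field_continuous[OF smooth_field_partial_deriv[OF g]]
    by (intro continuous_on_sum continuous_on_norm) (blast intro: continuous_on_subset)
  then have "compact ((\<lambda>x. \<Sum>i\<in>UNIV. norm (partial_deriv i g x)) ` S)"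
    using \<open>compact S\<close> by (rule compact_continuous_image)
  then obtain B where "\<forall>y\<in>(\<lambda>x. \<Sum>i\<in>UNIV. norm (partial_deriv i g x)) ` S. norm y \<le> B"
    using compact_imp_bounded bounded_iff by blast
  then have B: "(\<Sum>i\<in>UNIV. norm (partial_deriv i g x)) \<le> B" if "x \<in> S" for x
  proof -
    have "\<bar>\<Sum>i\<in>UNIV. norm (partial_deriv i g x)\<bar> \<le> B"
      using \<open>\<forall>y\<in>_. norm y \<le> B\<close> that by simp
    then show ?thesis by linarith
  qed
  show thesis
  proof (rule that, rule bounded_derivative_imp_lipschitz)
    fix x assume "x \<in> S"
    show "(g has_derivative (\<lambda>v. lie_deriv (\<lambda>_. v) g x)) (at x within S)"
      using smooth_field_has_derivative_lie_deriv[OF g] by (rule has_derivative_at_withinI)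
    show "onorm (\<lambda>v. lie_deriv (\<lambda>_. v) g x) \<le> max B 0"
      using onorm_lie_deriv_le[of g x] B[OF \<open>x \<in> S\<close>] by linarith
  qed (use \<open>convex S\<close> in auto)
qed

lemma two_stage_step_optimal:
  "two_stage_step (1/2) 1 0 (1/3) (2/3) L h un
     = un + h *\<^sub>R L un + (h^2/6) *\<^sub>R dtL L un
       + (h^2/3) *\<^sub>R dtL L (un + (h/2) *\<^sub>R L un + (h^2/8) *\<^sub>R dtL L un)"
proof -
  have "un + (1/2 * h) *\<^sub>R L un + ((1/2)^2 * h^2 / 2) *\<^sub>R dtL L un
      = un + (h/2) *\<^sub>R L un + (h^2/8) *\<^sub>R dtL L un"
    by (simp add: power2_eq_square)
  then show ?thesis
    unfolding two_stage_step_def Let_def by (simp add: scaleR_add_right power2_eq_square)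
qed

lemma stage_value_deviation:
  fixes c1 c2 c3 c4 :: "'a::real_normed_vector"
  assumes h: "0 < h" "h \<le> 1" and "0 \<le> M"
    and z: "norm (z - (x + (h/2) *\<^sub>R c1 + ((h/2)^2/2) *\<^sub>R c2 + ((h/2)^3/6) *\<^sub>R c3 + ((h/2)^4/24) *\<^sub>R c4))
      \<le> M * (h/2)^5"
  shows "norm (x + (h/2) *\<^sub>R c1 + ((h/2)^2/2) *\<^sub>R c2 - z) \<le> (M + norm c3 + norm c4) * h^3"
proof -
  define \<rho> where "\<rho> = z - (x + (h/2) *\<^sub>R c1 + ((h/2)^2/2) *\<^sub>R c2 + ((h/2)^3/6) *\<^sub>R c3 + ((h/2)^4/24) *\<^sub>R c4)"
  have "x + (h/2) *\<^sub>R c1 + ((h/2)^2/2) *\<^sub>R c2 - z = - (((h/2)^3/6) *\<^sub>R c3 + ((h/2)^4/24) *\<^sub>R c4 + \<rho>)"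
    by (simp add: \<rho>_def algebra_simps)
  then have "norm (x + (h/2) *\<^sub>R c1 + ((h/2)^2/2) *\<^sub>R c2 - z)
      \<le> (h/2)^3/6 * norm c3 + (h/2)^4/24 * norm c4 + norm \<rho>"
    using h norm_triangle_ineq[of "((h/2)^3/6) *\<^sub>R c3 + ((h/2)^4/24) *\<^sub>R c4" \<rho>]
      norm_triangle_ineq[of "((h/2)^3/6) *\<^sub>R c3" "((h/2)^4/24) *\<^sub>R c4"]
    by (simp only: norm_minus_cancel) simp
  also have "\<dots> \<le> (M + norm c3 + norm c4) * h^3"
  proof -
    have "h^5 \<le> h^3" "h^4 \<le> h^3" "0 \<le> h^3"
      using h by (simp_all add: power_decreasing)
    moreover have "(h/2)^5 = h^5/32" "(h/2)^3/6 = h^3/48" "(h/2)^4/24 = h^4/384"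
      by (simp_all add: power_divide)
    ultimately have b5: "(h/2)^5 \<le> h^3" and b3: "(h/2)^3/6 \<le> h^3" and b4: "(h/2)^4/24 \<le> h^3"
      by linarith+
    have "norm \<rho> \<le> h^3 * M"
      using z b5 \<open>0 \<le> M\<close> unfolding \<rho>_def[symmetric] by (metis mult.commute mult_left_mono order_trans)
    moreover have "(h/2)^3/6 * norm c3 \<le> h^3 * norm c3"
      using b3 by (rule mult_right_mono) simp
    moreover have "(h/2)^4/24 * norm c4 \<le> h^3 * norm c4"
      using b4 by (rule mult_right_mono) simp
    ultimately show ?thesis
      unfolding mult.commute[of "M + norm c3 + norm c4"] distrib_left by linarith
  qed
  finally show ?thesis .
qed

lemma optimal_step_error_estimate:
  fixes F :: "'a::real_normed_vector \<Rightarrow> 'a"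
  assumes h: "0 < h" "h \<le> 1" and "0 \<le> K" "0 \<le> M"
    and y: "norm (y - (x + h *\<^sub>R c1 + (h^2/2) *\<^sub>R c2 + (h^3/6) *\<^sub>R c3 + (h^4/24) *\<^sub>R c4)) \<le> M * h^5"
    and z: "norm (z - (x + (h/2) *\<^sub>R c1 + ((h/2)^2/2) *\<^sub>R c2 + ((h/2)^3/6) *\<^sub>R c3 + ((h/2)^4/24) *\<^sub>R c4))
      \<le> M * (h/2)^5"
    and Fz: "norm (F z - (c2 + (h/2) *\<^sub>R c3 + ((h/2)^2/2) *\<^sub>R c4)) \<le> M * (h/2)^3"
    and lip: "norm (F w - F z) \<le> K * norm (w - z)"
    and w: "w = x + (h/2) *\<^sub>R c1 + ((h/2)^2/2) *\<^sub>R c2"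
  shows "norm (x + h *\<^sub>R c1 + (h^2/6) *\<^sub>R c2 + (h^2/3) *\<^sub>R F w - y)
    \<le> (K * (M + norm c3 + norm c4) + 2 * M) * h^5"
proof -
  define \<sigma> where "\<sigma> = F z - (c2 + (h/2) *\<^sub>R c3 + ((h/2)^2/2) *\<^sub>R c4)"
  define \<tau> where "\<tau> = y - (x + h *\<^sub>R c1 + (h^2/2) *\<^sub>R c2 + (h^3/6) *\<^sub>R c3 + (h^4/24) *\<^sub>R c4)"
  \<comment> \<open>the increment is the Taylor polynomial of \<open>y\<close> once \<open>F w\<close> is replaced by that of \<open>F z\<close>\<close>
  have "(h * h / 2) *\<^sub>R c2 = (h * h / 3) *\<^sub>R c2 + (h * h / 6) *\<^sub>R c2"
    by (simp add: scaleR_left_distrib[symmetric])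
  then have err: "x + h *\<^sub>R c1 + (h^2/6) *\<^sub>R c2 + (h^2/3) *\<^sub>R F w - y
      = (h^2/3) *\<^sub>R (F w - F z) + (h^2/3) *\<^sub>R \<sigma> - \<tau>"
    by (simp add: \<sigma>_def \<tau>_def algebra_simps power2_eq_square power3_eq_cube power4_eq_xxxx power_divide)
  have Fw: "norm ((h^2/3) *\<^sub>R (F w - F z)) \<le> K * (M + norm c3 + norm c4) * h^5"
  proof -
    have "norm ((h^2/3) *\<^sub>R (F w - F z)) \<le> (h^2/3) * (K * ((M + norm c3 + norm c4) * h^3))"
      using lip stage_value_deviation[OF h \<open>0 \<le> M\<close> z] \<open>0 \<le> K\<close>
      by (simp add: w mult_left_mono order_trans)
    also have "\<dots> = K * (M + norm c3 + norm c4) * h^5 / 3"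
      by (simp flip: power_add)
    also have "\<dots> \<le> K * (M + norm c3 + norm c4) * h^5"
      using h \<open>0 \<le> K\<close> \<open>0 \<le> M\<close> by simp
    finally show ?thesis .
  qed
  have \<sigma>: "norm ((h^2/3) *\<^sub>R \<sigma>) \<le> M * h^5"
  proof -
    have "norm ((h^2/3) *\<^sub>R \<sigma>) \<le> (h^2/3) * (M * (h/2)^3)"
      using Fz unfolding \<sigma>_def[symmetric] by (simp add: mult_left_mono)
    also have "\<dots> = M * h^5 / 24"
      by (simp add: power_divide flip: power_add)
    also have "\<dots> \<le> M * h^5"
      using h \<open>0 \<le> M\<close> by simp
    finally show ?thesis .
  qed
  have \<tau>: "norm \<tau> \<le> M * h^5"
    using y unfolding \<tau>_def .
  show ?thesis
    unfolding err distrib_right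
    using norm_triangle_ineq4[of "(h^2/3) *\<^sub>R (F w - F z) + (h^2/3) *\<^sub>R \<sigma>" \<tau>]
      norm_triangle_ineq[of "(h^2/3) *\<^sub>R (F w - F z)" "(h^2/3) *\<^sub>R \<sigma>"] Fw \<sigma> \<tau>
    by linarith
qed

lemma cball_containing_path_and_stages:
  fixes u :: "real \<Rightarrow> 'a::real_normed_vector"
  assumes "continuous_on {a..b} u"
  obtains R where "u ` {a..b} \<subseteq> cball x R"
    and "\<And>h. 0 < h \<Longrightarrow> h \<le> 1 \<Longrightarrow> x + (h/2) *\<^sub>R v + ((h/2)^2/2) *\<^sub>R w \<in> cball x R"
proof -
  have "bounded (u ` {a..b})"
    using assms by (intro compact_imp_bounded compact_continuous_image compact_Icc)
  then obtain R0 where R0: "\<And>t. t \<in> {a..b} \<Longrightarrow> dist x (u t) \<le> R0"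
    unfolding bounded_any_center[of _ x] by blast
  show thesis
  proof (rule that[of "max R0 0 + norm v + norm w"])
    show "u ` {a..b} \<subseteq> cball x (max R0 0 + norm v + norm w)"
    proof (rule image_subsetI)
      fix t assume "t \<in> {a..b}"
      then show "u t \<in> cball x (max R0 0 + norm v + norm w)"
        using R0[of t] max.cobounded1[of R0 0] norm_ge_zero[of v] norm_ge_zero[of w]
        unfolding mem_cball by linarith
    qed
    fix h :: real assume h: "0 < h" "h \<le> 1"
    have "dist x (x + (h/2) *\<^sub>R v + ((h/2)^2/2) *\<^sub>R w) = norm ((x + (h/2) *\<^sub>R v + ((h/2)^2/2) *\<^sub>R w) - x)"
      by (metis dist_commute dist_norm)
    also have "\<dots> = norm ((h/2) *\<^sub>R v + ((h/2)^2/2) *\<^sub>R w)"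
      by simp
    also have "\<dots> \<le> h/2 * norm v + (h/2)^2/2 * norm w"
      by (rule norm_triangle_le) (use h in simp)
    also have "\<dots> \<le> norm v + norm w"
      using h power_le_one[of "h/2" 2] by (intro add_mono mult_left_le_one_le) auto
    finally show "x + (h/2) *\<^sub>R v + ((h/2)^2/2) *\<^sub>R w \<in> cball x (max R0 0 + norm v + norm w)"
      by simp
  qed
qed

lemma fourth_order_accurate_optimal:
  fixes L :: "real^'m::finite \<Rightarrow> real^'m"
  assumes L: "smooth_field L"
  shows "fourth_order_accurate (1/2) 1 0 (1/3) (2/3) L"
  unfolding fourth_order_accurate_def
proof (intro allI impI, elim conjE)
  fix tn un T and u :: "real \<Rightarrow> real^'m"
  assume "T > 0" and u0: "u tn = un"
    and sol: "\<forall>t\<in>{tn..tn+T}. (u has_vector_derivative L (u t)) (at t within {tn..tn+T})"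
  define D where "D k = solution_deriv L k un" for k
  obtain M where "0 \<le> M"
    and u_taylor: "\<And>s. s \<in> {0..T} \<Longrightarrow>
      norm (u (tn + s) - (un + s *\<^sub>R D 1 + (s^2/2) *\<^sub>R D 2 + (s^3/6) *\<^sub>R D 3 + (s^4/24) *\<^sub>R D 4)) \<le> M * s^5"
    and D2_taylor: "\<And>s. s \<in> {0..T} \<Longrightarrow>
      norm (solution_deriv L 2 (u (tn + s)) - (D 2 + s *\<^sub>R D 3 + (s^2/2) *\<^sub>R D 4)) \<le> M * s^3"
    using solution_taylor_bounds[OF L sol] unfolding D_def u0 by blast
  have "continuous_on {tn..tn+T} u"
    unfolding continuous_on_eq_continuous_within using sol has_vector_derivative_continuous by blast
  then obtain R where path: "u ` {tn..tn+T} \<subseteq> cball un R"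
    and stages: "\<And>h. 0 < h \<Longrightarrow> h \<le> 1 \<Longrightarrow> un + (h/2) *\<^sub>R D 1 + ((h/2)^2/2) *\<^sub>R D 2 \<in> cball un R"
    by (rule cball_containing_path_and_stages[where x = un and v = "D 1" and w = "D 2"]) blast
  obtain K where K: "K-lipschitz_on (cball un R) (solution_deriv L 2)"
    by (rule smooth_field_lipschitz_on[OF smooth_field_solution_deriv[OF L] compact_cball convex_cball])
  have bound: "norm (two_stage_step (1/2) 1 0 (1/3) (2/3) L h un - u (tn + h))
      \<le> (K * (M + norm (D 3) + norm (D 4)) + 2 * M) * h^5" if h: "0 < h" "h \<le> 1" "h \<le> T" for h
  proof -
    define w where "w = un + (h/2) *\<^sub>R D 1 + ((h/2)^2/2) *\<^sub>R D 2"
    have "tn + h/2 \<in> {tn..tn+T}"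
      using h by simp
    then have "u (tn + h/2) \<in> cball un R"
      using path by blast
    with stages[OF h(1,2)]
    have "norm (solution_deriv L 2 w - solution_deriv L 2 (u (tn + h/2))) \<le> K * norm (w - u (tn + h/2))"
      unfolding w_def by (rule lipschitz_on_normD[OF K])
    from optimal_step_error_estimate[OF h(1,2) lipschitz_on_nonneg[OF K] \<open>0 \<le> M\<close>
        u_taylor[of h] u_taylor[of "h/2"] D2_taylor[of "h/2"] this w_def]
    show ?thesis
      using h unfolding two_stage_step_optimal w_def D_def solution_deriv_1 solution_deriv_2[OF L]
      by (simp add: power_divide)
  qed
  show "(\<lambda>dt. norm (two_stage_step (1/2) 1 0 (1/3) (2/3) L dt un - u (tn + dt))) \<in> O[at_right 0](\<lambda>dt. dt ^ 5)"
  proof (rule bigoI)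
    show "eventually (\<lambda>h. norm (norm (two_stage_step (1/2) 1 0 (1/3) (2/3) L h un - u (tn + h)))
        \<le> (K * (M + norm (D 3) + norm (D 4)) + 2 * M) * norm (h ^ 5)) (at_right 0)"
      unfolding eventually_at_right_field
      using \<open>T > 0\<close> bound by (intro exI[of _ "min 1 T"]) (auto simp: abs_of_pos)
  qed
qed

section \<open>Uniqueness of the parameters\<close>

lemma poly_bigo_at_right_0_imp_coeff_eq_0:
  fixes p :: "real poly"
  assumes bigo: "poly p \<in> O[at_right 0](\<lambda>h. h^n)"
  shows "k < n \<Longrightarrow> coeff p k = 0"
proof (induction k rule: less_induct)
  case (less k)
  define Q where "Q h = (\<Sum>j\<in>{k..degree p}. coeff p j * h^(j - k))" for h :: real
  have poly_eq: "poly p h = h^k * Q h" for h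
  proof -
    have "poly p h = (\<Sum>j\<in>{k..degree p}. coeff p j * h^j)"
      unfolding poly_altdef using less by (intro sum.mono_neutral_right) auto
    also have "\<dots> = (\<Sum>j\<in>{k..degree p}. h^k * (coeff p j * h^(j - k)))"
      by (intro sum.cong refl) (auto simp: power_add[symmetric])
    finally show ?thesis
      by (simp add: Q_def sum_distrib_left)
  qed
  have "Q 0 = (\<Sum>j\<in>{k..degree p}. if j = k then coeff p j else 0)"
    unfolding Q_def by (intro sum.cong refl) (auto simp: power_0_left)
  also have "\<dots> = coeff p k"
    by (simp add: coeff_eq_0)
  finally have "Q 0 = coeff p k" .
  moreover have "isCont Q 0"
    unfolding Q_def by (intro continuous_intros)
  ultimately have "(Q \<longlongrightarrow> coeff p k) (at_right 0)"
    by (metis isCont_def filterlim_at_split)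
  obtain C where "eventually (\<lambda>h. norm (poly p h) \<le> C * norm (h^n)) (at_right 0)"
    using landau_o.bigE[OF bigo] by blast
  then have bound: "eventually (\<lambda>h. \<bar>Q h\<bar> \<le> C * h^(n - k)) (at_right 0)"
    using eventually_at_right_less[of 0]
  proof eventually_elim
    case (elim h)
    have "h^n = h^k * h^(n - k)"
      using less.prems by (simp flip: power_add)
    then have "h^k * \<bar>Q h\<bar> \<le> h^k * (C * h^(n - k))"
      using elim by (simp add: poly_eq abs_mult mult_ac)
    then show ?case
      using elim by simp
  qed
  have "((\<lambda>h. C * h^(n - k)) \<longlongrightarrow> 0) (at_right 0)"
    using less.prems by (auto intro!: tendsto_eq_intros)
  then have "((\<lambda>h. \<bar>Q h\<bar>) \<longlongrightarrow> 0) (at_right 0)"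
    by (intro tendsto_sandwich[OF _ bound tendsto_const]) simp
  from tendsto_unique[OF _ tendsto_rabs[OF \<open>(Q \<longlongrightarrow> coeff p k) (at_right 0)\<close>] this]
  show "coeff p k = 0"
    by simp
qed

lemma coeff_eq_0_of_component_error:
  fixes E :: "real \<Rightarrow> real^'m::finite"
  assumes E: "(\<lambda>h. norm (E h)) \<in> O[at_right 0](\<lambda>h. h^n)"
    and component: "\<And>h. E h $ i = poly p h - r h"
    and r: "r \<in> O[at_right 0](\<lambda>h. h^n)"
    and "k < n"
  shows "coeff p k = 0"
proof (rule poly_bigo_at_right_0_imp_coeff_eq_0[OF _ \<open>k < n\<close>])
  have "(\<lambda>h. E h $ i) \<in> O[at_right 0](\<lambda>h. norm (E h))"
    by (intro bigoI[of _ 1] always_eventually) (simp add: component_le_norm_cart)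
  then have "(\<lambda>h. E h $ i) \<in> O[at_right 0](\<lambda>h. h^n)"
    using E by (rule landau_o.big_trans)
  from sum_in_bigo(1)[OF this r] show "poly p \<in> O[at_right 0](\<lambda>h. h^n)"
    by (simp add: component)
qed

lemma exp_taylor_4_bigo: "(\<lambda>h::real. exp h - (1 + h + h^2/2 + h^3/6 + h^4/24)) \<in> O[at_right 0](\<lambda>h. h^5)"
  by real_asymp

lemma geometric_4_bigo: "(\<lambda>h::real. 1 / (1 - h) - (1 + h + h^2 + h^3 + h^4)) \<in> O[at_right 0](\<lambda>h. h^5)"
  by real_asymp

lemma dtL_id: "dtL (\<lambda>x::real^'m::finite. x) = (\<lambda>x. x)"
  by (simp add: dtL_eq_lie_deriv[OF smooth_field_id] lie_deriv_id)

lemma order_conditions_linear: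
  assumes acc: "fourth_order_accurate A B0 B1 C0 C1 (\<lambda>x::real^'m::finite. x)"
  shows "B0 + B1 = 1" "B1 * A + (C0 + C1) / 2 = 1/2" "B1 * A^2 / 2 + C1 * A / 2 = 1/6" "C1 * A^2 / 4 = 1/24"
proof -
  fix i :: 'm
  define v :: "real^'m" where "v = vec 1"
  define u where "u t = exp t *\<^sub>R v" for t
  have "\<forall>t\<in>{0..0+1}. (u has_vector_derivative u t) (at t within {0..0+1})"
    unfolding u_def by (auto intro!: derivative_eq_intros)
  then have E: "(\<lambda>h. norm (two_stage_step A B0 B1 C0 C1 (\<lambda>x. x) h v - u (0 + h))) \<in> O[at_right 0](\<lambda>h. h^5)"
    using acc[unfolded fourth_order_accurate_def, rule_format, where tn = 0 and un = v and u = u and T = 1]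
    by (simp add: u_def)
  define p where "p = [:0, B0 + B1 - 1, B1 * A + (C0 + C1) / 2 - 1/2, B1 * A^2 / 2 + C1 * A / 2 - 1/6,
    C1 * A^2 / 4 - 1/24:]"
  have "(two_stage_step A B0 B1 C0 C1 (\<lambda>x. x) h v - u (0 + h)) $ i
      = poly p h - (exp h - (1 + h + h^2/2 + h^3/6 + h^4/24))" for h
  proof -
    have "(two_stage_step A B0 B1 C0 C1 (\<lambda>x. x) h v - u (0 + h)) $ i
        = 1 + h * (B0 + B1 * (1 + A * h + A^2 * h^2 / 2)) + h^2 / 2 * (C0 + C1 * (1 + A * h + A^2 * h^2 / 2)) - exp h"
      by (simp add: two_stage_step_def Let_def dtL_id v_def u_def)
    also have "\<dots> = poly p h - (exp h - (1 + h + h^2/2 + h^3/6 + h^4/24))"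
      by (simp add: p_def eval_nat_numeral) (simp add: field_simps)
    finally show ?thesis .
  qed
  from coeff_eq_0_of_component_error[OF E this exp_taylor_4_bigo]
  have "coeff p k = 0" if "k < 5" for k
    using that by blast
  from this[of 1] this[of 2] this[of 3] this[of 4]
  show "B0 + B1 = 1" "B1 * A + (C0 + C1) / 2 = 1/2" "B1 * A^2 / 2 + C1 * A / 2 = 1/6" "C1 * A^2 / 4 = 1/24"
    by (simp_all add: p_def numeral_eq_Suc)
qed

definition square_field :: "real^'m::finite \<Rightarrow> real^'m" where
  "square_field x = (\<chi> k. (x$k)^2)"

lemma smooth_field_square_field: "smooth_field (square_field :: real^'m::finite \<Rightarrow> real^'m)"
proof -
  define h where "h j x = x$j *\<^sub>R axis j (1::real)" for j :: 'm and x :: "real^'m"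
  obtain ts where eq: "\<And>x. (\<Sum>j\<in>UNIV. x $ j *\<^sub>R h j x) = product_sum ts x"
    and ts: "set ts = (\<lambda>j. (j, \<lambda>x. x, h j)) ` UNIV"
    using sum_UNIV_eq_product_sum[of "\<lambda>x. x" h] by blast
  have "h j = product_sum [(j, \<lambda>x. x, \<lambda>_. axis j 1)]" for j
    by (simp add: h_def fun_eq_iff)
  then have "smooth_field (h j)" for j
    by (simp add: smooth_field_product_sum smooth_field_id smooth_field_const)
  then have "smooth_field (product_sum ts)"
    using ts by (auto intro!: smooth_field_product_sum smooth_field_id)
  moreover have "square_field = product_sum ts"
    using eq by (simp add: fun_eq_iff h_def square_field_def sum_scaleR_axis power2_eq_square)
  ultimately show ?thesis by simp
qed

lemma partial_deriv_square_field: "partial_deriv i square_field x = (2 * x$i) *\<^sub>R axis i 1"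
proof (rule partial_deriv_eqI)
  have "((\<lambda>t. \<Sum>k\<in>UNIV. ((x + t *\<^sub>R axis i 1) $ k)^2 *\<^sub>R axis k 1) has_vector_derivative
      (\<Sum>k\<in>UNIV. (2 * x$k * axis i 1 $ k) *\<^sub>R axis k (1::real))) (at 0)"
    by (intro has_vector_derivative_sum has_vector_derivative_eq_rhs[OF has_vector_derivative_scaleR])
      (auto intro!: derivative_eq_intros)
  moreover have "(\<Sum>k\<in>UNIV. (2 * x$k * axis i 1 $ k) *\<^sub>R axis k (1::real)) = (2 * x$i) *\<^sub>R axis i 1"
    unfolding sum_scaleR_axis by (simp add: vec_eq_iff axis_def)
  ultimately show "((\<lambda>t. square_field (x + t *\<^sub>R axis i 1)) has_vector_derivative (2 * x$i) *\<^sub>R axis i 1) (at 0)"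
    by (simp add: square_field_def sum_scaleR_axis)
qed

lemma dtL_square_field: "dtL square_field x = (\<chi> k. 2 * (x$k)^3)"
proof -
  have "dtL square_field x = (\<Sum>i\<in>UNIV. (2 * (x$i)^3) *\<^sub>R axis i 1)"
    unfolding dtL_eq_lie_deriv[OF smooth_field_square_field] lie_deriv_def partial_deriv_square_field
    by (intro sum.cong refl) (simp add: square_field_def power2_eq_square power3_eq_cube)
  then show ?thesis
    by (simp add: sum_scaleR_axis)
qed

lemma order_condition_square:
  assumes acc: "fourth_order_accurate A B0 B1 C0 C1 (square_field :: real^'m::finite \<Rightarrow> real^'m)"
  shows "2 * A^3 * B1 + 6 * A^2 * C1 = 1"
proof -
  fix i :: 'm
  define v :: "real^'m" where "v = vec 1"
  define u where "u t = (1 / (1 - t)) *\<^sub>R v" for t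
  have "\<forall>t\<in>{0..0+1/2}. (u has_vector_derivative square_field (u t)) (at t within {0..0+1/2})"
  proof
    fix t :: real assume "t \<in> {0..0+1/2}"
    then have "((\<lambda>t. 1 / (1 - t)) has_real_derivative (1 / (1 - t))^2) (at t within {0..0+1/2})"
      by (auto intro!: derivative_eq_intros simp: power2_eq_square field_simps)
    from has_vector_derivative_scaleR[OF this has_vector_derivative_const[of v]]
    have "(u has_vector_derivative (1 / (1 - t))^2 *\<^sub>R v) (at t within {0..0+1/2})"
      by (simp add: u_def[abs_def])
    moreover have "square_field (u t) = (1 / (1 - t))^2 *\<^sub>R v"
      by (simp add: u_def v_def square_field_def vec_eq_iff)
    ultimately show "(u has_vector_derivative square_field (u t)) (at t within {0..0+1/2})"
      by simp
  qed
  then have E: "(\<lambda>h. norm (two_stage_step A B0 B1 C0 C1 square_field h v - u (0 + h))) \<in> O[at_right 0](\<lambda>h. h^5)"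
    using acc[unfolded fourth_order_accurate_def, rule_format, where tn = 0 and un = v and u = u and T = "1/2"]
    by (simp add: u_def)
  define p where "p = [:0, B0 + B1 - 1, 2 * A * B1 + C0 + C1 - 1, 3 * A^2 * B1 + 3 * A * C1 - 1,
    2 * A^3 * B1 + 6 * A^2 * C1 - 1, A^4 * B1 + 7 * A^3 * C1, 6 * A^4 * C1, 3 * A^5 * C1, A^6 * C1:]"
  have "(two_stage_step A B0 B1 C0 C1 square_field h v - u (0 + h)) $ i
      = poly p h - (1 / (1 - h) - (1 + h + h^2 + h^3 + h^4))" for h
  proof -
    define q where "q = 1 + A * h + A^2 * h^2"
    have "(two_stage_step A B0 B1 C0 C1 square_field h v - u (0 + h)) $ i
        = 1 + h * (B0 + B1 * q^2) + h^2 * (C0 + C1 * q^3) - 1 / (1 - h)"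
      by (simp add: two_stage_step_def Let_def dtL_square_field square_field_def v_def u_def q_def)
    also have "\<dots> = poly p h - (1 / (1 - h) - (1 + h + h^2 + h^3 + h^4))"
      by (simp add: p_def q_def eval_nat_numeral) (simp add: field_simps)
    finally show ?thesis .
  qed
  from coeff_eq_0_of_component_error[OF E this geometric_4_bigo, of 4]
  show ?thesis
    by (simp add: p_def numeral_eq_Suc)
qed

lemma order_conditions_unique:
  fixes A B0 B1 C0 C1 :: real
  assumes "B0 + B1 = 1" "B1 * A + (C0 + C1) / 2 = 1/2" "B1 * A^2 / 2 + C1 * A / 2 = 1/6"
    and "C1 * A^2 / 4 = 1/24" "2 * A^3 * B1 + 6 * A^2 * C1 = 1"
  shows "A = 1/2 \<and> B0 = 1 \<and> B1 = 0 \<and> C0 = 1/3 \<and> C1 = 2/3"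
proof -
  have C1A2: "C1 * A^2 = 1/6"
    using assms(4) by simp
  then have "A \<noteq> 0"
    by auto
  moreover have "A^3 * B1 = 0"
    using assms(5) C1A2 by (simp add: algebra_simps)
  ultimately have B1: "B1 = 0"
    by simp
  have C1A: "C1 * A = 1/3"
    using assms(3) B1 by (simp add: algebra_simps)
  have "A * (C1 * A) = C1 * A^2"
    by (simp add: power2_eq_square)
  then have A: "A = 1/2"
    using C1A C1A2 by simp
  have C1: "C1 = 2/3"
    using C1A A by simp
  show ?thesis
    using assms(1,2) A B1 C1 by simp
qed

theorem proposition2p1:
  shows "(\<forall>L :: real^'m::finite \<Rightarrow> real^'m. smooth_field L \<longrightarrow>
            fourth_order_accurate (1/2) 1 0 (1/3) (2/3) L)
       \<and> (\<forall>A B0 B1 C0 C1.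
            (\<forall>L :: real^'m \<Rightarrow> real^'m. smooth_field L \<longrightarrow> fourth_order_accurate A B0 B1 C0 C1 L)
            \<longrightarrow> A = 1/2 \<and> B0 = 1 \<and> B1 = 0 \<and> C0 = 1/3 \<and> C1 = 2/3)"
proof (rule conjI; intro allI impI)
  fix L :: "real^'m \<Rightarrow> real^'m"
  assume "smooth_field L"
  then show "fourth_order_accurate (1/2) 1 0 (1/3) (2/3) L"
    by (rule fourth_order_accurate_optimal)
next
  fix A B0 B1 C0 C1 :: real
  assume acc: "\<forall>L :: real^'m \<Rightarrow> real^'m. smooth_field L \<longrightarrow> fourth_order_accurate A B0 B1 C0 C1 L"
  have linear: "fourth_order_accurate A B0 B1 C0 C1 (\<lambda>x::real^'m. x)"
    using acc smooth_field_id by blast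
  have square: "fourth_order_accurate A B0 B1 C0 C1 (square_field :: real^'m \<Rightarrow> real^'m)"
    using acc smooth_field_square_field by blast
  show "A = 1/2 \<and> B0 = 1 \<and> B1 = 0 \<and> C0 = 1/3 \<and> C1 = 2/3"
    using order_conditions_linear[OF linear] order_condition_square[OF square]
    by (rule order_conditions_unique)
qed

end
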